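(* Let $p\in(0,1]$ and let $\bar Q=(\bar q_{j,k})_{j,k\geq1}$ be the generator on $\mathbb N=\{1,2,\dots\}$ with $\bar q_{j,k}=\binom{j-1}{k-1}p^k(1-p)^{j-k}$ for $1\leq k\leq j-1$, $\bar q_{j,j+1}=(j+1)p$, $\bar q_{j,j}=p^j-(2+j)p$, and $\bar q_{j,k}=0$ otherwise. Let $q>0$ satisfy $-1+q+p^q\geq0$. Then the stationary distribution of $\bar Q$, if it exists, does not have a finite $q$th moment. *)

theory Defs
  imports "HOL-Analysis.Analysis"
begin

text \<open>The generator Qbar on the state space {1,2,...}; entries with j = 0 or k = 0 are
  set to 0 and never used.\<close>
definition Qbar :: "real \<Rightarrow> nat \<Rightarrow> nat \<Rightarrow> real" where
  "Qbar p j k =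
     (if j = 0 \<or> k = 0 then 0
      else if k \<le> j - 1 then real ((j - 1) choose (k - 1)) * p ^ k * (1 - p) ^ (j - k)
      else if k = j + 1 then real (j + 1) * p
      else if k = j then p ^ j - (2 + real j) * p
      else 0)"

definition stationary_dist :: "(nat \<Rightarrow> nat \<Rightarrow> real) \<Rightarrow> (nat \<Rightarrow> real) \<Rightarrow> bool" where
  "stationary_dist Q \<pi> \<longleftrightarrow>
     (\<forall>k\<ge>1. \<pi> k \<ge> 0) \<and> (\<pi> has_sum 1) {1..} \<and>
     (\<forall>k\<ge>1. ((\<lambda>j. \<pi> j * Q j k) has_sum 0) {1..})"

end

theory Submission
  imports Defs
begin

text \<open>Let \<open>f k = k powr q\<close>. The drift \<open>Qbar_apply p f j\<close> is strictly positive in every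
  state \<open>j\<close>: the binomial down-jumps are controlled by a Jensen-type estimate (the harmonic mean
  of the target state is at least \<open>p j\<close>), the up-jump gains strictly more than its linearisation,
  and what remains is \<open>p j powr q * (p powr q - 1 + q) \<ge> 0\<close>. If \<open>\<pi>\<close> integrated \<open>f\<close>,
  stationarity would make the \<open>\<pi>\<close>-average of this drift vanish. As \<open>f\<close> is unbounded, one tests
  stationarity against \<open>f\<close> truncated at a level \<open>N\<close> instead: its drift agrees with that of \<open>f\<close>
  below \<open>N\<close> and is at least \<open>-p f j\<close> in states \<open>j \<ge> N\<close>. Hence
  \<open>\<pi> j\<^sub>0 * Qbar_apply p f j\<^sub>0 \<le> p * (\<Sum>j\<ge>N. f j * \<pi> j)\<close>, and the right-hand side tends to 0.\<close>

text \<open>The tangent-line bound for \<open>t \<mapsto> t powr q\<close> in the variable \<open>1/t\<close>; it follows from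
  \<open>ln u \<ge> 1 - 1/u\<close> applied to \<open>u = y/x\<close>.\<close>

lemma powr_ge_tangent:
  fixes x y q :: real
  assumes "0 < x" "0 < y" "0 \<le> q"
  shows "x powr q * (1 + q * (1 - x / y)) \<le> y powr q"
proof -
  have "1 - x / y \<le> ln (y / x)"
    using ln_le_minus_one[of "x / y"] assms by (simp add: ln_div)
  then have "1 + q * (1 - x / y) \<le> 1 + q * ln (y / x)"
    using assms by (simp add: mult_left_mono)
  also have "\<dots> \<le> (y / x) powr q"
    using assms by (simp add: powr_def)
  finally show ?thesis
    using assms by (simp add: mult_left_mono powr_divide field_simps)
qed

lemma powr_gt_tangent:
  fixes x y q :: real
  assumes "0 < x" "0 < y" "0 < q" "x \<noteq> y"
  shows "x powr q * (1 + q * (1 - x / y)) < y powr q"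
proof -
  have "ln (x / y) < x / y - 1"
    using ln_le_minus_one[of "x / y"] ln_eq_minus_one[of "x / y"] assms by force
  then have "1 + q * (1 - x / y) < 1 + q * ln (y / x)"
    using assms by (simp add: ln_div)
  also have "\<dots> \<le> (y / x) powr q"
    using assms by (simp add: powr_def)
  finally show ?thesis
    using assms by (simp add: powr_divide field_simps)
qed

lemma Suc_powr_gt:
  assumes "j \<ge> 1" "0 < q"
  shows "real (j + 1) * real j powr q + q * real j powr q < real (j + 1) * real (j + 1) powr q"
proof -
  have "real j powr q * (1 + q * (1 - real j / real (j + 1))) < real (j + 1) powr q"
    using powr_gt_tangent[of "real j" "real (j + 1)" q] assms by simp
  moreover have "1 - real j / real (j + 1) = 1 / real (j + 1)"
    by (simp add: field_simps)
  ultimately have "real j powr q * (1 + q / real (j + 1)) < real (j + 1) powr q"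
    by simp
  then have "real (j + 1) * (real j powr q * (1 + q / real (j + 1)))
      < real (j + 1) * real (j + 1) powr q"
    by (intro mult_strict_left_mono) auto
  moreover have "real (j + 1) * (real j powr q * (1 + q / real (j + 1)))
      = real (j + 1) * real j powr q + q * real j powr q"
    by (simp add: field_simps del: of_nat_Suc)
  ultimately show ?thesis by linarith
qed

lemma has_sum_sum:
  fixes f :: "'i \<Rightarrow> 'a \<Rightarrow> 'b::topological_comm_monoid_add"
  assumes "finite I" "\<And>i. i \<in> I \<Longrightarrow> (f i has_sum s i) A"
  shows "((\<lambda>x. \<Sum>i\<in>I. f i x) has_sum (\<Sum>i\<in>I. s i)) A"
  using assms by (induction I rule: finite_induct) (auto intro: has_sum_add)

lemma infsum_atLeast_tendsto_0:
  fixes f :: "nat \<Rightarrow> 'a::banach"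
  assumes "f summable_on {m..}"
  shows "(\<lambda>N. infsum f {N..}) \<longlonglongrightarrow> 0"
proof -
  define S where "S = infsum f {m..}"
  define f' where "f' i = (if m \<le> i then f i else 0)" for i
  have "(f' has_sum S) UNIV"
    using has_sum_infsum[OF assms] unfolding S_def
    by (subst has_sum_cong_neutral[where T = "{m..}" and g = f]) (auto simp: f'_def)
  then have partial: "(\<lambda>N. \<Sum>i<N. f' i) \<longlonglongrightarrow> S"
    using has_sum_imp_sums sums_def by blast
  have "infsum f {N..} = S - (\<Sum>i<N. f' i)" if "m \<le> N" for N
  proof -
    have "infsum f ({m..<N} \<union> {N..}) = infsum f {m..<N} + infsum f {N..}"
      by (rule infsum_Un_disjoint) (auto intro: summable_on_subset_banach[OF assms] simp: that)
    moreover have "{m..<N} \<union> {N..} = {m..}" using that by auto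
    moreover have "(\<Sum>i<N. f' i) = (\<Sum>i\<in>{m..<N}. f i)"
      unfolding f'_def by (rule sum.mono_neutral_cong_right) auto
    ultimately show ?thesis by (simp add: S_def)
  qed
  then have "\<forall>\<^sub>F N in sequentially. S - (\<Sum>i<N. f' i) = infsum f {N..}"
    using eventually_ge_at_top[of m] by (metis (mono_tags, lifting) eventually_mono)
  moreover have "(\<lambda>N. S - (\<Sum>i<N. f' i)) \<longlonglongrightarrow> 0"
    using tendsto_diff[OF tendsto_const[of S] partial] by simp
  ultimately show ?thesis by (rule Lim_transform_eventually[rotated])
qed

lemma stationary_dist_pos:
  assumes "stationary_dist Q \<pi>"
  obtains j where "j \<ge> 1" "\<pi> j > 0"
proof -
  have nonneg: "\<And>k. k \<ge> 1 \<Longrightarrow> \<pi> k \<ge> 0" and total: "(\<pi> has_sum 1) {1..}"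
    using assms unfolding stationary_dist_def by auto
  have "\<exists>j\<ge>1. \<pi> j \<noteq> 0"
  proof (rule ccontr)
    assume "\<not> ?thesis"
    then have "(\<pi> has_sum 0) {1..}" by (intro has_sum_0) auto
    with total show False using has_sum_unique by fastforce
  qed
  then show ?thesis using nonneg that by (metis order_le_neq_trans)
qed

text \<open>\<open>binom_weight p j\<close> is \<open>p\<close> times the law of \<open>1 + Binomial(j - 1, p)\<close>. It agrees with
  \<open>Qbar p j k\<close> for \<open>k < j\<close>, and its value \<open>p ^ j\<close> at \<open>k = j\<close> is the first summand of the
  diagonal entry.\<close>

definition binom_weight :: "real \<Rightarrow> nat \<Rightarrow> nat \<Rightarrow> real" where
  "binom_weight p j k = real ((j - 1) choose (k - 1)) * p ^ k * (1 - p) ^ (j - k)"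

lemma binom_weight_nonneg: "0 \<le> p \<Longrightarrow> p \<le> 1 \<Longrightarrow> 0 \<le> binom_weight p j k"
  by (simp add: binom_weight_def)

lemma sum_binom_weight:
  assumes "j \<ge> 1"
  shows "(\<Sum>k\<in>{1..j}. binom_weight p j k) = p"
proof -
  obtain m where m: "j = Suc m" using assms by (cases j) auto
  have "(\<Sum>k\<in>{1..j}. binom_weight p j k) = (\<Sum>i\<in>{0..m}. binom_weight p j (Suc i))"
    unfolding m using sum.shift_bounds_cl_Suc_ivl[of "binom_weight p (Suc m)" 0 m] by simp
  also have "\<dots> = p * (\<Sum>i\<le>m. real (m choose i) * p ^ i * (1 - p) ^ (m - i))"
    unfolding sum_distrib_left atLeast0AtMost
    by (rule sum.cong) (auto simp: binom_weight_def m)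
  also have "\<dots> = p * (p + (1 - p)) ^ m" by (simp only: binomial_ring)
  finally show ?thesis by simp
qed

lemma sum_binom_weight_divide_le:
  assumes "j \<ge> 1" "0 \<le> p" "p \<le> 1"
  shows "(\<Sum>k\<in>{1..j}. binom_weight p j k / real k) \<le> 1 / real j"
proof -
  have "binom_weight p j k / real k = real (j choose k) * p ^ k * (1 - p) ^ (j - k) / real j"
    if k: "k \<in> {1..j}" for k
  proof -
    obtain i where i: "k = Suc i" using k by (cases k) auto
    have "real (Suc i) * real (j choose Suc i) = real j * real ((j - 1) choose i)"
      using binomial_absorption[of i j] by (metis of_nat_mult)
    then have "real ((j - 1) choose (k - 1)) / real k = real (j choose k) / real j"
      using k i by (simp add: field_simps)
    moreover have "binom_weight p j k / real k
        = real ((j - 1) choose (k - 1)) / real k * (p ^ k * (1 - p) ^ (j - k))"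
      by (simp add: binom_weight_def)
    ultimately show ?thesis by simp
  qed
  then have "(\<Sum>k\<in>{1..j}. binom_weight p j k / real k)
      = (\<Sum>k\<in>{1..j}. real (j choose k) * p ^ k * (1 - p) ^ (j - k) / real j)"
    by (rule sum.cong[OF refl])
  also have "\<dots> \<le> (\<Sum>k\<le>j. real (j choose k) * p ^ k * (1 - p) ^ (j - k) / real j)"
    by (rule sum_mono2) (use assms in auto)
  also have "\<dots> = (p + (1 - p)) ^ j / real j"
    by (simp only: binomial_ring sum_divide_distrib)
  finally show ?thesis by simp
qed

text \<open>A Jensen-type lower bound: the mean of \<open>k powr q\<close> under the weights, normalised by
  their total mass \<open>p\<close>, is at least \<open>(p j) powr q\<close>, because the harmonic mean of \<open>k\<close> is at
  least \<open>p j\<close>.\<close>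

lemma sum_binom_weight_powr_ge:
  assumes j: "j \<ge> 1" and p: "0 < p" "p \<le> 1" and q: "0 \<le> q"
  shows "p * (p * real j) powr q \<le> (\<Sum>k\<in>{1..j}. binom_weight p j k * real k powr q)"
proof -
  define x where "x = p * real j"
  define X where "X = x powr q"
  have x: "0 < x" using j p by (simp add: x_def)
  have harmonic: "X * q * x * (\<Sum>k\<in>{1..j}. binom_weight p j k / real k) \<le> X * q * x * (1 / real j)"
    using sum_binom_weight_divide_le[OF j, of p] p x q by (intro mult_left_mono) (auto simp: X_def)
  have "X * p = X * (1 + q) * p - X * q * x * (1 / real j)"
    using j by (simp add: x_def algebra_simps)
  also have "\<dots> \<le> X * (1 + q) * (\<Sum>k\<in>{1..j}. binom_weight p j k)
      - X * q * x * (\<Sum>k\<in>{1..j}. binom_weight p j k / real k)"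
    using sum_binom_weight[OF j, of p] harmonic by simp
  also have "\<dots> = (\<Sum>k\<in>{1..j}. binom_weight p j k * (X * (1 + q * (1 - x / real k))))"
    by (simp add: sum_distrib_left sum_subtractf[symmetric] algebra_simps diff_divide_distrib)
  also have "\<dots> \<le> (\<Sum>k\<in>{1..j}. binom_weight p j k * real k powr q)"
  proof (rule sum_mono)
    fix k assume "k \<in> {1..j}"
    then have "X * (1 + q * (1 - x / real k)) \<le> real k powr q"
      unfolding X_def using powr_ge_tangent[of x "real k" q] x q by simp
    then show "binom_weight p j k * (X * (1 + q * (1 - x / real k)))
        \<le> binom_weight p j k * real k powr q"
      using binom_weight_nonneg[of p j k] p by (simp add: mult_left_mono)
  qed
  finally show ?thesis by (simp add: X_def x_def mult.commute)
qed

definition Qbar_apply :: "real \<Rightarrow> (nat \<Rightarrow> real) \<Rightarrow> nat \<Rightarrow> real" where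
  "Qbar_apply p f j = (\<Sum>k\<in>{1..j+1}. Qbar p j k * f k)"

lemma Qbar_eq_0_above: "j + 1 < k \<Longrightarrow> Qbar p j k = 0"
  by (simp add: Qbar_def)

lemma Qbar_apply_eq:
  assumes "j \<ge> 1"
  shows "Qbar_apply p f j =
     (\<Sum>k\<in>{1..j}. binom_weight p j k * f k) - (2 + real j) * p * f j + real (j + 1) * p * f (j + 1)"
proof -
  have below: "(\<Sum>k\<in>{1..<j}. Qbar p j k * f k) = (\<Sum>k\<in>{1..<j}. binom_weight p j k * f k)"
    by (rule sum.cong) (auto simp: Qbar_def binom_weight_def)
  have "{1..j+1} = insert (j+1) (insert j {1..<j})" "{1..j} = insert j {1..<j}"
    using assms by auto
  then have "Qbar_apply p f j
      = (\<Sum>k\<in>{1..<j}. Qbar p j k * f k) + Qbar p j j * f j + Qbar p j (j+1) * f (j+1)"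
    "(\<Sum>k\<in>{1..j}. binom_weight p j k * f k)
      = (\<Sum>k\<in>{1..<j}. binom_weight p j k * f k) + binom_weight p j j * f j"
    unfolding Qbar_apply_def by simp_all
  moreover have "Qbar p j j = binom_weight p j j - (2 + real j) * p"
    "Qbar p j (j+1) = real (j+1) * p"
    using assms by (auto simp: Qbar_def binom_weight_def)
  ultimately show ?thesis unfolding below by (simp add: algebra_simps)
qed

lemma Qbar_apply_diff_const:
  assumes "j \<ge> 1"
  shows "Qbar_apply p (\<lambda>k. f k - c) j = Qbar_apply p f j"
proof -
  have "(\<Sum>k\<in>{1..j}. binom_weight p j k * (f k - c))
      = (\<Sum>k\<in>{1..j}. binom_weight p j k * f k) - p * c"
    using sum_binom_weight[OF assms, of p]
    by (simp add: right_diff_distrib sum_subtractf sum_distrib_right[symmetric])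
  then show ?thesis
    using Qbar_apply_eq[OF assms, of p f] Qbar_apply_eq[OF assms, of p "\<lambda>k. f k - c"]
    by (simp add: algebra_simps)
qed

lemma Qbar_apply_powr_pos:
  assumes j: "j \<ge> 1" and p: "0 < p" "p \<le> 1" and q: "0 < q"
    and pq: "-1 + q + p powr q \<ge> 0"
  shows "Qbar_apply p (\<lambda>k. real k powr q) j > 0"
proof -
  define J where "J = real j powr q"
  have "0 \<le> p * J * (-1 + q + p powr q)"
    using p pq by (simp add: J_def)
  also have "\<dots> = p * (p * real j) powr q - (2 + real j) * p * J + p * (real (j + 1) * J + q * J)"
    using p by (simp add: J_def powr_mult algebra_simps)
  also have "\<dots> < (\<Sum>k\<in>{1..j}. binom_weight p j k * real k powr q) - (2 + real j) * p * J
      + p * (real (j + 1) * real (j + 1) powr q)"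
    using sum_binom_weight_powr_ge[OF j p, of q] Suc_powr_gt[OF j q] p q
    unfolding J_def by (smt (verit) mult_strict_left_mono)
  also have "\<dots> = Qbar_apply p (\<lambda>k. real k powr q) j"
    using Qbar_apply_eq[OF j, of p "\<lambda>k. real k powr q"] by (simp add: J_def algebra_simps)
  finally show ?thesis .
qed

lemma stationary_dist_Qbar_apply:
  assumes "stationary_dist (Qbar p) \<pi>" and g: "\<And>k. N < k \<Longrightarrow> g k = 0"
  shows "((\<lambda>j. \<pi> j * Qbar_apply p g j) has_sum 0) {1..}"
proof -
  have "((\<lambda>j. \<pi> j * Qbar p j k * g k) has_sum 0) {1..}" if "k \<ge> 1" for k
  proof -
    have "((\<lambda>j. \<pi> j * Qbar p j k) has_sum 0) {1..}"
      using assms(1) that unfolding stationary_dist_def by simp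
    then show ?thesis using has_sum_cmult_left by fastforce
  qed
  then have "((\<lambda>j. \<Sum>k\<in>{1..N}. \<pi> j * Qbar p j k * g k) has_sum (\<Sum>k\<in>{1..N}. 0)) {1..}"
    by (intro has_sum_sum) auto
  moreover have "(\<Sum>k\<in>{1..N}. \<pi> j * Qbar p j k * g k) = \<pi> j * Qbar_apply p g j" for j
  proof -
    have "(\<Sum>k\<in>{1..N}. \<pi> j * Qbar p j k * g k) = (\<Sum>k\<in>{1..N+j+1}. \<pi> j * Qbar p j k * g k)"
      by (rule sum.mono_neutral_left) (auto simp: g)
    also have "\<dots> = (\<Sum>k\<in>{1..j+1}. \<pi> j * Qbar p j k * g k)"
      by (rule sum.mono_neutral_right) (auto simp: Qbar_eq_0_above)
    finally show ?thesis
      by (simp only: Qbar_apply_def sum_distrib_left mult.assoc)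
  qed
  ultimately show ?thesis by simp
qed

lemma stationary_dist_Qbar_apply_le_tail:
  assumes stat: "stationary_dist (Qbar p) \<pi>" and p: "0 \<le> p" "p \<le> 1"
    and f: "mono f" "\<And>k. 0 \<le> f k"
    and summable: "(\<lambda>k. f k * \<pi> k) summable_on {N..}" and N: "N \<ge> 1"
  shows "(\<Sum>j\<in>{1..<N}. \<pi> j * Qbar_apply p f j) \<le> p * (\<Sum>\<^sub>\<infinity>j\<in>{N..}. f j * \<pi> j)"
proof -
  define g where "g k = (if k \<le> N then f k - f N else 0)" for k
  define h where "h j = \<pi> j * Qbar_apply p g j" for j
  have nonneg: "\<And>j. j \<ge> 1 \<Longrightarrow> \<pi> j \<ge> 0"
    using stat unfolding stationary_dist_def by auto
  have "(h has_sum 0) {1..}"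
    unfolding h_def by (rule stationary_dist_Qbar_apply[OF stat, of N]) (simp add: g_def)
  then have h_summable: "h summable_on {1..}"
    by (auto simp: summable_on_def)
  have "0 = infsum h ({1..<N} \<union> {N..})"
    using \<open>(h has_sum 0) {1..}\<close> N by (metis infsumI ivl_disj_un_one(8))
  also have "\<dots> = infsum h {1..<N} + infsum h {N..}"
    by (rule infsum_Un_disjoint)
      (use N in \<open>auto intro: summable_on_subset_banach[OF h_summable]\<close>)
  finally have split: "(\<Sum>j\<in>{1..<N}. h j) + infsum h {N..} = 0" by simp
  have "h j = \<pi> j * Qbar_apply p f j" if "j \<in> {1..<N}" for j
  proof -
    have "Qbar_apply p g j = Qbar_apply p (\<lambda>k. f k - f N) j"
      using that unfolding Qbar_apply_def g_def by (intro sum.cong) auto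
    then show ?thesis
      using Qbar_apply_diff_const[of j p f] that by (simp add: h_def)
  qed
  then have low: "(\<Sum>j\<in>{1..<N}. h j) = (\<Sum>j\<in>{1..<N}. \<pi> j * Qbar_apply p f j)"
    by simp
  have "- p * (f j * \<pi> j) \<le> h j" if "j \<in> {N..}" for j
  proof -
    have j: "j \<ge> 1" "N \<le> j" using that N by auto
    have "- p * f j \<le> - p * f N"
      using monoD[OF f(1) j(2)] p by (simp add: mult_left_mono)
    also have "\<dots> = (\<Sum>k\<in>{1..j}. binom_weight p j k * (- f N))"
      using sum_binom_weight[OF j(1), of p] by (simp add: sum_negf sum_distrib_right[symmetric])
    also have "\<dots> \<le> (\<Sum>k\<in>{1..j}. binom_weight p j k * g k)"
      using binom_weight_nonneg[OF p] f(2)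
      by (intro sum_mono mult_left_mono) (auto simp: g_def)
    also have "\<dots> = Qbar_apply p g j"
      using Qbar_apply_eq[OF j(1), of p g] j by (simp add: g_def)
    finally have "\<pi> j * (- p * f j) \<le> \<pi> j * Qbar_apply p g j"
      using nonneg[OF j(1)] by (rule mult_left_mono)
    then show ?thesis unfolding h_def by (simp add: algebra_simps)
  qed
  then have "(\<Sum>\<^sub>\<infinity>j\<in>{N..}. - p * (f j * \<pi> j)) \<le> infsum h {N..}"
    using N by (intro infsum_mono summable_on_cmult_right[OF summable]
        summable_on_subset_banach[OF h_summable]) auto
  then have "- p * (\<Sum>\<^sub>\<infinity>j\<in>{N..}. f j * \<pi> j) \<le> infsum h {N..}"
    by (simp only: infsum_cmult_right')
  with split low show ?thesis by linarith
qed

theorem proposition9: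
  fixes p q :: real and \<pi> :: "nat \<Rightarrow> real"
  assumes "0 < p" and "p \<le> 1"
    and "0 < q" and "-1 + q + p powr q \<ge> 0"
    and "stationary_dist (Qbar p) \<pi>"
  shows "\<not> ((\<lambda>k. real k powr q * \<pi> k) summable_on {1..})"
proof
  assume summable: "(\<lambda>k. real k powr q * \<pi> k) summable_on {1..}"
  obtain j0 where j0: "j0 \<ge> 1" "\<pi> j0 > 0"
    using stationary_dist_pos[OF assms(5)] .
  define c where "c = \<pi> j0 * Qbar_apply p (\<lambda>k. real k powr q) j0"
  have "c > 0"
    using Qbar_apply_powr_pos[OF j0(1) assms(1-4)] j0 by (simp add: c_def)
  moreover have "(\<lambda>N. p * (\<Sum>\<^sub>\<infinity>j\<in>{N..}. real j powr q * \<pi> j)) \<longlonglongrightarrow> 0"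
    by (rule tendsto_mult_right_zero[OF infsum_atLeast_tendsto_0[OF summable]])
  ultimately have "\<forall>\<^sub>F N in sequentially. p * (\<Sum>\<^sub>\<infinity>j\<in>{N..}. real j powr q * \<pi> j) < c \<and> j0 < N"
    using order_tendstoD(2) eventually_gt_at_top eventually_conj by blast
  then obtain N where N: "p * (\<Sum>\<^sub>\<infinity>j\<in>{N..}. real j powr q * \<pi> j) < c" "j0 < N"
    using eventually_happens' by force
  have "c \<le> (\<Sum>j\<in>{1..<N}. \<pi> j * Qbar_apply p (\<lambda>k. real k powr q) j)"
    unfolding c_def
    using N(2) j0 Qbar_apply_powr_pos[OF _ assms(1-4)] assms(5)
    by (intro member_le_sum) (auto simp: stationary_dist_def less_imp_le)
  also have "\<dots> \<le> p * (\<Sum>\<^sub>\<infinity>j\<in>{N..}. real j powr q * \<pi> j)"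
  proof (rule stationary_dist_Qbar_apply_le_tail)
    show "mono (\<lambda>k. real k powr q)"
      using assms(3) by (intro monoI powr_mono2) auto
    show "(\<lambda>k. real k powr q * \<pi> k) summable_on {N..}"
      using N(2) j0(1) by (auto intro: summable_on_subset_banach[OF summable])
  qed (use assms N(2) in auto)
  finally show False using N(1) by linarith
qed

end
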